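(* Let $G_n$ be a connected graph with $n$ nodes whose degrees satisfy $\max_i d_i/\min_i d_i\le C$ for some constant $C$. Then for every $\epsilon\in(0,1)$, $$t_{\mathrm{cov}}(1-\epsilon)\;\ge\;\frac{n}{2C}\log\big((1-\epsilon)n\big).$$
   Context: The averaging process on a finite, undirected, connected graph $G=(V,E)$, $V=\{1,\dots,n\}$: the state vector $v(t)\in\mathbb R^n$, $t=0,1,2,\dots$, starts from a given $v(0)$; at each step $t\ge 1$ an edge $\{i,j\}\in E$ is chosen uniformly at random (independently of all previous choices) and both $v_i$ and $v_j$ are replaced by $(v_i+v_j)/2$, all other coordinates unchanged. $d_i$ is the degree of vertex $i$. For $w\in\mathbb R^n$ let $n(w)=\#\{i:w_i\neq0\}$. For $\alpha\in(0,1]$ and a vertex $i$, $t_{\mathrm{cov}}(\alpha,i)$ is the expectation of the first time $t$ at which $n(v(t))\ge\alpha n$ for the process started at $v(0)=e_i$, and $t_{\mathrm{cov}}(\alpha)=\max_i t_{\mathrm{cov}}(\alpha,i)$. Logarithms are natural. *)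

theory Defs
  imports "HOL-Probability.Probability"
begin

definition simple_graph :: "nat \<Rightarrow> nat set set \<Rightarrow> bool" where
  "simple_graph n E \<longleftrightarrow> (\<forall>e\<in>E. e \<subseteq> {..<n} \<and> card e = 2)"

definition graph_connected :: "nat \<Rightarrow> nat set set \<Rightarrow> bool" where
  "graph_connected n E \<longleftrightarrow>
     (\<forall>i<n. \<forall>j<n. (i, j) \<in> {(a, b). {a, b} \<in> E}\<^sup>*)"

definition degree :: "nat set set \<Rightarrow> nat \<Rightarrow> nat" where
  "degree E i = card {e\<in>E. i \<in> e}"

definition avg_step :: "nat set \<Rightarrow> (nat \<Rightarrow> real) \<Rightarrow> (nat \<Rightarrow> real)" where
  "avg_step e v = (\<lambda>k. if k \<in> e then (\<Sum>j\<in>e. v j) / 2 else v k)"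

text \<open>State v(t) given the stream of chosen edges (edge chosen at step t+1 is w !! t).\<close>

fun avg_state :: "(nat \<Rightarrow> real) \<Rightarrow> nat set stream \<Rightarrow> nat \<Rightarrow> (nat \<Rightarrow> real)" where
  "avg_state v0 w 0 = v0"
| "avg_state v0 w (Suc t) = avg_step (w !! t) (avg_state v0 w t)"

definition nnz :: "nat \<Rightarrow> (nat \<Rightarrow> real) \<Rightarrow> nat" where
  "nnz n v = card {i\<in>{..<n}. v i \<noteq> 0}"

definition cov_time :: "nat \<Rightarrow> real \<Rightarrow> (nat \<Rightarrow> real) \<Rightarrow> nat set stream \<Rightarrow> ennreal" where
  "cov_time n \<alpha> v0 w =
     (if \<exists>t. real (nnz n (avg_state v0 w t)) \<ge> \<alpha> * real n
      then of_nat (LEAST t. real (nnz n (avg_state v0 w t)) \<ge> \<alpha> * real n)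
      else \<infinity>)"

definition edge_process :: "nat set set \<Rightarrow> nat set stream measure" where
  "edge_process E = stream_space (measure_pmf (pmf_of_set E))"

definition tcov_from :: "nat \<Rightarrow> nat set set \<Rightarrow> real \<Rightarrow> nat \<Rightarrow> ennreal" where
  "tcov_from n E \<alpha> i =
     (\<integral>\<^sup>+ w. cov_time n \<alpha> (\<lambda>k. if k = i then 1 else 0) w \<partial>edge_process E)"

definition tcov :: "nat \<Rightarrow> nat set set \<Rightarrow> real \<Rightarrow> ennreal" where
  "tcov n E \<alpha> = (SUP i\<in>{..<n}. tcov_from n E \<alpha> i)"

end

theory Submission
  imports Defs "HOL-Analysis.Harmonic_Numbers"
begin

(* Track the potential h(v) = K H_(nnz v - 1), where K = n / (2C) and H_m is the m-th harmonic
  number.  Averaging along an edge enlarges the support S of v by at most one vertex, and only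
  if the edge leaves S; there are at most |S| d_max such edges, and K d_max <= |E| because
  n d_min <= 2 |E|.  So h grows by K / |S| with probability at most |S| / K, i.e. by at most 1
  per step in expectation.  As h vanishes at a unit vector and h >= K ln ((1 - eps) n) once
  (1 - eps) n coordinates are nonzero, optional stopping at min(T, N) followed by N -> infinity
  gives E T >= K ln ((1 - eps) n). *)

fun stopped_state :: "('s \<Rightarrow> bool) \<Rightarrow> ('e \<Rightarrow> 's \<Rightarrow> 's) \<Rightarrow> nat \<Rightarrow> 's \<Rightarrow> 'e stream \<Rightarrow> 's" where
  "stopped_state P F 0 s w = s"
| "stopped_state P F (Suc N) s w =
     (if P s then s else stopped_state P F N (F (shd w) s) (stl w))"

fun stopped_time :: "('s \<Rightarrow> bool) \<Rightarrow> ('e \<Rightarrow> 's \<Rightarrow> 's) \<Rightarrow> nat \<Rightarrow> 's \<Rightarrow> 'e stream \<Rightarrow> nat" where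
  "stopped_time P F 0 s w = 0"
| "stopped_time P F (Suc N) s w =
     (if P s then 0 else Suc (stopped_time P F N (F (shd w) s) (stl w)))"

lemma stopped_or_time_eq:
  "P (stopped_state P F N s w) \<or> stopped_time P F N s w = N"
  by (induction N arbitrary: s w) auto

lemma measurable_shd_update:
  "(\<lambda>w. F (shd w)) \<in> measurable (stream_space (measure_pmf p)) (count_space (range F))"
  by (rule measurable_compose[OF measurable_shd, where N = "measure_pmf p"]) simp

lemma measurable_stopped_state:
  assumes "countable (range F)"
  shows "stopped_state P F N s \<in> measurable (stream_space (measure_pmf p)) (count_space UNIV)"
proof (induction N arbitrary: s)
  case 0
  have "stopped_state P F 0 s = (\<lambda>_. s)" by auto
  then show ?case by simp
next
  case (Suc N)
  have "(\<lambda>w. stopped_state P F N (F (shd w) s) (stl w))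
      \<in> measurable (stream_space (measure_pmf p)) (count_space UNIV)"
    by (rule measurable_compose_countable'
        [where f = "\<lambda>G w. stopped_state P F N (G s) (stl w)" and I = "range F"])
      (auto intro: measurable_compose[OF measurable_stl Suc.IH] measurable_shd_update assms)
  then show ?case by simp
qed

lemma measurable_stopped_time:
  assumes "countable (range F)"
  shows "stopped_time P F N s \<in> measurable (stream_space (measure_pmf p)) (count_space UNIV)"
proof (induction N arbitrary: s)
  case 0
  have "stopped_time P F 0 s = (\<lambda>_. 0)" by auto
  then show ?case by simp
next
  case (Suc N)
  have "(\<lambda>w. stopped_time P F N (F (shd w) s) (stl w))
      \<in> measurable (stream_space (measure_pmf p)) (count_space UNIV)"
    by (rule measurable_compose_countable'
        [where f = "\<lambda>G w. stopped_time P F N (G s) (stl w)" and I = "range F"])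
      (auto intro: measurable_compose[OF measurable_stl Suc.IH] measurable_shd_update assms)
  then show ?case by simp
qed

lemma nn_integral_stopped_potential_le:
  fixes h :: "'s \<Rightarrow> ennreal" and p :: "'e pmf"
  assumes countable: "countable (range F)"
    and drift: "\<And>s. \<not> P s \<Longrightarrow> (\<integral>\<^sup>+x. h (F x s) \<partial>p) \<le> h s + 1"
  shows "(\<integral>\<^sup>+w. h (stopped_state P F N s w) \<partial>stream_space p)
    \<le> h s + (\<integral>\<^sup>+w. of_nat (stopped_time P F N s w) \<partial>stream_space p)"
proof (induction N arbitrary: s)
  interpret S: prob_space "stream_space p"
    by (rule prob_space.prob_space_stream_space) (rule prob_space_measure_pmf)
  have measurable:
    "(\<lambda>w. h (stopped_state P F N s w)) \<in> borel_measurable (stream_space p)"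
    "(\<lambda>w. of_nat (stopped_time P F N s w) :: ennreal) \<in> borel_measurable (stream_space p)"
    for N s
    by (auto intro: measurable_compose[OF measurable_stopped_state[OF countable]]
        measurable_compose[OF measurable_stopped_time[OF countable]])
  note split = prob_space.nn_integral_stream_space[OF prob_space_measure_pmf measurable(1)]
    prob_space.nn_integral_stream_space[OF prob_space_measure_pmf measurable(2)]
  {
    case 0
    then show ?case by (simp add: S.emeasure_space_1)
  next
    case (Suc N)
    show ?case
    proof (cases "P s")
      case True
      then show ?thesis by (simp add: S.emeasure_space_1)
    next
      case False
      define next_time where
        "next_time x = (\<integral>\<^sup>+w. of_nat (stopped_time P F N (F x s) w) \<partial>stream_space p)" for x
      have "(\<integral>\<^sup>+w. h (stopped_state P F (Suc N) s w) \<partial>stream_space p)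
          = (\<integral>\<^sup>+x. (\<integral>\<^sup>+w. h (stopped_state P F N (F x s) w) \<partial>stream_space p) \<partial>p)"
        using False by (subst split(1)) simp
      also have "\<dots> \<le> (\<integral>\<^sup>+x. h (F x s) + next_time x \<partial>p)"
        unfolding next_time_def by (intro nn_integral_mono Suc.IH)
      also have "\<dots> = (\<integral>\<^sup>+x. h (F x s) \<partial>p) + (\<integral>\<^sup>+x. next_time x \<partial>p)"
        by (rule nn_integral_add) auto
      also have "\<dots> \<le> h s + 1 + (\<integral>\<^sup>+x. next_time x \<partial>p)"
        using drift[OF False] by (rule add_right_mono)
      also have "\<dots> = h s + (\<integral>\<^sup>+x. 1 + next_time x \<partial>p)"
        by (subst nn_integral_add) (auto simp: add.assoc)
      also have "\<dots> = h s + (\<integral>\<^sup>+w. of_nat (stopped_time P F (Suc N) s w) \<partial>stream_space p)"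
        using False unfolding next_time_def
        by (subst split(2)) (simp add: nn_integral_add S.emeasure_space_1 measurable(2))
      finally show ?thesis .
    qed
  }
qed

lemma ennreal_le_of_le_plus_vanishing:
  fixes x y z :: ennreal and c :: real
  assumes "z < top" and le: "\<And>N. 1 \<le> N \<Longrightarrow> x \<le> y + ennreal (c / real N) * z"
  shows "x \<le> y"
proof (rule LIMSEQ_le_const)
  have "(\<lambda>N. ennreal (c / real N) * z) \<longlonglongrightarrow> ennreal 0 * z"
    by (subst mult.commute, subst (2) mult.commute)
      (intro ennreal_tendsto_cmult assms(1) tendsto_ennrealI lim_const_over_n)
  then show "(\<lambda>N. y + ennreal (c / real N) * z) \<longlonglongrightarrow> y"
    using tendsto_add[OF tendsto_const] by fastforce
  show "\<exists>N. \<forall>n\<ge>N. x \<le> y + ennreal (c / real n) * z"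
    using le by blast
qed

lemma stopped_potential_lower_bound:
  fixes h :: "'s \<Rightarrow> ennreal" and p :: "'e pmf" and c :: real
  assumes countable: "countable (range F)"
    and drift: "\<And>s. \<not> P s \<Longrightarrow> (\<integral>\<^sup>+x. h (F x s) \<partial>p) \<le> h s + 1"
    and hit: "\<And>s. P s \<Longrightarrow> ennreal c \<le> h s"
    and time_le: "\<And>N. (\<integral>\<^sup>+w. of_nat (stopped_time P F N s w) \<partial>stream_space p) \<le> T"
  shows "ennreal c \<le> h s + T"
proof (cases "T = \<infinity>")
  case False
  interpret S: prob_space "stream_space p"
    by (rule prob_space.prob_space_stream_space) (rule prob_space_measure_pmf)
  show ?thesis
  proof (rule ennreal_le_of_le_plus_vanishing)
    show "T < top" using False by (simp add: less_top)
    fix N :: nat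
    assume "1 \<le> N"
    let ?time = "\<lambda>w. of_nat (stopped_time P F N s w) :: ennreal"
    have c_eq: "ennreal c = ennreal (c / real N) * of_nat N"
    proof (cases "0 \<le> c")
      case True
      with \<open>1 \<le> N\<close> show ?thesis
        by (simp add: ennreal_of_nat_eq_real_of_nat ennreal_mult[symmetric])
    qed (simp add: ennreal_neg divide_nonpos_nonneg)
    have pointwise: "ennreal c \<le> h (stopped_state P F N s w) + ennreal (c / real N) * ?time w" for w
    proof (cases "P (stopped_state P F N s w)")
      case True
      then show ?thesis by (intro add_increasing2 hit) auto
    next
      case False
      then show ?thesis using stopped_or_time_eq[of P F N s w] by (simp add: c_eq)
    qed
    have "ennreal c = (\<integral>\<^sup>+w. ennreal c \<partial>stream_space p)"
      by (simp add: S.emeasure_space_1)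
    also have "\<dots>
        \<le> (\<integral>\<^sup>+w. h (stopped_state P F N s w) + ennreal (c / real N) * ?time w \<partial>stream_space p)"
      by (intro nn_integral_mono pointwise)
    also have "\<dots> = (\<integral>\<^sup>+w. h (stopped_state P F N s w) \<partial>stream_space p)
        + ennreal (c / real N) * (\<integral>\<^sup>+w. ?time w \<partial>stream_space p)"
    proof -
      have "(\<lambda>w. h (stopped_state P F N s w)) \<in> borel_measurable (stream_space p)"
        "?time \<in> borel_measurable (stream_space p)"
        by (auto intro: measurable_compose[OF measurable_stopped_state[OF countable]]
            measurable_compose[OF measurable_stopped_time[OF countable]])
      then show ?thesis by (simp add: nn_integral_add nn_integral_cmult)
    qed
    also have "\<dots> \<le> (h s + T) + ennreal (c / real N) * T"
      using nn_integral_stopped_potential_le[OF countable drift, where N = N and s = s] time_le[of N]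
      by (intro add_mono mult_left_mono) (auto intro: order.trans add_left_mono)
    finally show "ennreal c \<le> h s + T + ennreal (c / real N) * T" .
  qed
qed simp

lemma finite_edges: "simple_graph n E \<Longrightarrow> finite E"
  unfolding simple_graph_def by (meson finite_Pow_iff finite_lessThan finite_subset PowI subsetI)

lemma sum_degree_eq:
  assumes "simple_graph n E"
  shows "(\<Sum>i<n. degree E i) = 2 * card E"
proof -
  have "(\<Sum>i<n. degree E i) = (\<Sum>i<n. \<Sum>e\<in>E. if i \<in> e then 1 else 0)"
    unfolding degree_def using finite_edges[OF assms] by (simp add: sum.inter_filter[symmetric])
  also have "\<dots> = (\<Sum>e\<in>E. \<Sum>i<n. if i \<in> e then 1 else 0)"
    by (rule sum.swap)
  also have "\<dots> = (\<Sum>e\<in>E. 2)"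
  proof (rule sum.cong)
    fix e assume "e \<in> E"
    then have "e \<subseteq> {..<n}" "card e = 2" using assms unfolding simple_graph_def by auto
    then have "{i\<in>{..<n}. i \<in> e} = e" by auto
    then show "(\<Sum>i<n. if i \<in> e then 1 else 0) = (2::nat)"
      using \<open>card e = 2\<close> by (simp add: sum.inter_filter[symmetric])
  qed simp
  finally show ?thesis by simp
qed

lemma degree_pos:
  assumes "simple_graph n E" "graph_connected n E" "2 \<le> n" "i < n"
  shows "0 < degree E i"
proof -
  define j where "j = (if i = 0 then 1 else 0::nat)"
  have "j < n" "j \<noteq> i" unfolding j_def using assms(3) by auto
  then have "(i, j) \<in> {(a, b). {a, b} \<in> E}\<^sup>*"
    using assms(2,4) unfolding graph_connected_def by blast
  then obtain y where "{i, y} \<in> E"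
    using \<open>j \<noteq> i\<close> by (auto elim: converse_rtranclE)
  then have "{e\<in>E. i \<in> e} \<noteq> {}" by blast
  then show ?thesis
    unfolding degree_def using finite_edges[OF assms(1)] by (simp add: card_gt_0_iff)
qed

lemma degree_ratio_ge_one:
  assumes "0 < n" "\<And>i. i < n \<Longrightarrow> 0 < degree E i"
    and "real (Max (degree E ` {..<n})) / real (Min (degree E ` {..<n})) \<le> C"
  shows "1 \<le> C"
proof -
  have "Min (degree E ` {..<n}) \<le> Max (degree E ` {..<n})"
    using assms(1) by (intro order.trans[OF Min_le Max_ge, of _ "degree E 0"]) auto
  moreover have "0 < Min (degree E ` {..<n})"
    using assms(1,2) by (subst Min_gr_iff) auto
  ultimately have "1 \<le> real (Max (degree E ` {..<n})) / real (Min (degree E ` {..<n}))"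
    by simp
  with assms(3) show ?thesis by linarith
qed

lemma degree_mult_le_card_edges:
  assumes "simple_graph n E" "0 < n" "\<And>i. i < n \<Longrightarrow> 0 < degree E i"
    and ratio: "real (Max (degree E ` {..<n})) / real (Min (degree E ` {..<n})) \<le> C"
    and "i < n"
  shows "real (degree E i) * (real n / (2 * C)) \<le> real (card E)"
proof -
  define dmin where "dmin = Min (degree E ` {..<n})"
  have "1 \<le> C" by (rule degree_ratio_ge_one[OF assms(2,3) ratio])
  have "0 < dmin"
    unfolding dmin_def using assms(2,3) by (subst Min_gr_iff) auto
  have "real (degree E i) \<le> real (Max (degree E ` {..<n}))"
    using \<open>i < n\<close> by simp
  also have "\<dots> \<le> C * dmin"
    using ratio \<open>0 < dmin\<close> by (simp add: dmin_def pos_divide_le_eq)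
  finally have "real (degree E i) * (real n / (2 * C)) \<le> C * dmin * (real n / (2 * C))"
    using \<open>1 \<le> C\<close> by (intro mult_right_mono) auto
  also have "\<dots> = real (n * dmin) / 2"
    using \<open>1 \<le> C\<close> by simp
  also have "n * dmin \<le> (\<Sum>i<n. degree E i)"
    using sum_mono[of "{..<n}" "\<lambda>_. dmin" "degree E"] by (simp add: dmin_def)
  then have "real (n * dmin) \<le> real (2 * card E)"
    unfolding sum_degree_eq[OF assms(1)] of_nat_le_iff .
  then have "real (n * dmin) / 2 \<le> real (card E)"
    by simp
  finally show ?thesis .
qed

definition nonzeros :: "nat \<Rightarrow> (nat \<Rightarrow> real) \<Rightarrow> nat set" where
  "nonzeros n v = {i\<in>{..<n}. v i \<noteq> 0}"

definition crosses :: "nat set \<Rightarrow> nat set \<Rightarrow> bool" where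
  "crosses e S \<longleftrightarrow> e \<inter> S \<noteq> {} \<and> \<not> e \<subseteq> S"

lemma nnz_eq_card_nonzeros: "nnz n v = card (nonzeros n v)"
  unfolding nnz_def nonzeros_def ..

lemma finite_nonzeros [simp]: "finite (nonzeros n v)"
  unfolding nonzeros_def by simp

lemma nonzeros_avg_step_subset:
  assumes "e \<subseteq> {..<n}"
  shows "nonzeros n (avg_step e v)
    \<subseteq> nonzeros n v \<union> (if e \<inter> nonzeros n v = {} then {} else e - nonzeros n v)"
proof -
  have "(\<Sum>j\<in>e. v j) = 0" if "e \<inter> nonzeros n v = {}"
    using that assms by (intro sum.neutral) (auto simp: nonzeros_def)
  then show ?thesis
    by (auto simp: nonzeros_def avg_step_def split: if_splits)
qed

lemma nnz_avg_step_le: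
  assumes "e \<subseteq> {..<n}" "card e = 2"
  shows "nnz n (avg_step e v) \<le> nnz n v + (if crosses e (nonzeros n v) then 1 else 0)"
proof -
  define S where "S = nonzeros n v"
  define new where "new = (if e \<inter> S = {} then {} else e - S)"
  have "finite e" using assms(2) by (simp add: card_ge_0_finite)
  have "card new \<le> (if crosses e S then 1 else 0)"
  proof (cases "crosses e S")
    case True
    then have "card (e - S) < card e"
      using \<open>finite e\<close> by (intro psubset_card_mono) (auto simp: crosses_def)
    with assms(2) True show ?thesis by (auto simp: new_def crosses_def)
  qed (auto simp: new_def crosses_def Diff_eq_empty_iff[THEN iffD2])
  moreover have "nnz n (avg_step e v) \<le> card (S \<union> new)"
    unfolding nnz_eq_card_nonzeros S_def new_def
    using \<open>finite e\<close> by (intro card_mono nonzeros_avg_step_subset assms(1)) auto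
  moreover have "card (S \<union> new) \<le> card S + card new"
    by (rule card_Un_le)
  ultimately show ?thesis
    unfolding nnz_eq_card_nonzeros S_def by linarith
qed

lemma harm_potential_avg_step_le:
  assumes "e \<subseteq> {..<n}" "card e = 2" "0 \<le> K"
  shows "K * harm (nnz n (avg_step e v) - 1)
    \<le> K * harm (nnz n v - 1) + (if crosses e (nonzeros n v) then K / nnz n v else 0)"
proof (cases "crosses e (nonzeros n v)")
  case True
  then have "nonzeros n v \<noteq> {}" by (auto simp: crosses_def)
  then have "1 \<le> nnz n v" by (simp add: nnz_eq_card_nonzeros Suc_le_eq card_gt_0_iff)
  then have "harm (nnz n v) = harm (nnz n v - 1) + 1 / real (nnz n v)"
    using harm_Suc[of "nnz n v - 1"] by (simp add: inverse_eq_divide)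
  moreover have "harm (nnz n (avg_step e v) - 1) \<le> (harm (nnz n v) :: real)"
    using nnz_avg_step_le[OF assms(1,2), of v] True by (intro harm_mono) simp
  ultimately show ?thesis
    using True assms(3) mult_left_mono by (fastforce simp: distrib_left)
next
  case False
  then have "harm (nnz n (avg_step e v) - 1) \<le> (harm (nnz n v - 1) :: real)"
    using nnz_avg_step_le[OF assms(1,2), of v] by (intro harm_mono) simp
  with False assms(3) show ?thesis by (simp add: mult_left_mono)
qed

lemma card_crossing_edges_le:
  assumes "finite E" "finite S"
  shows "card {e\<in>E. crosses e S} \<le> (\<Sum>a\<in>S. degree E a)"
proof -
  have "card {e\<in>E. crosses e S} \<le> card (\<Union>a\<in>S. {e\<in>E. a \<in> e})"
    using assms by (intro card_mono) (auto simp: crosses_def)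
  also have "\<dots> \<le> (\<Sum>a\<in>S. degree E a)"
    unfolding degree_def using assms(2) by (rule card_UN_le)
  finally show ?thesis .
qed

lemma sum_harm_potential_avg_step_le:
  assumes "simple_graph n E" "0 \<le> K"
    and degree_bound: "\<And>i. i < n \<Longrightarrow> real (degree E i) * K \<le> real (card E)"
  shows "(\<Sum>e\<in>E. K * harm (nnz n (avg_step e v) - 1))
    \<le> real (card E) * (K * harm (nnz n v - 1) + 1)"
proof -
  define S where "S = nonzeros n v"
  define k where "k = nnz n v"
  define B where "B = {e\<in>E. crosses e S}"
  have "finite E" by (rule finite_edges[OF assms(1)])
  have "real (card B) * K \<le> (\<Sum>a\<in>S. real (degree E a)) * K"
    using card_crossing_edges_le[OF \<open>finite E\<close> finite_nonzeros] \<open>0 \<le> K\<close>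
    unfolding B_def S_def by (intro mult_right_mono) (simp_all flip: of_nat_sum)
  also have "\<dots> \<le> (\<Sum>a\<in>S. real (card E))"
    unfolding sum_distrib_right by (intro sum_mono degree_bound) (simp add: S_def nonzeros_def)
  also have "\<dots> = k * real (card E)"
    by (simp add: S_def k_def nnz_eq_card_nonzeros)
  finally have crossing_bound: "real (card B) * (K / k) \<le> real (card E)"
    by (cases "k = 0") (simp_all add: field_simps)
  have "(\<Sum>e\<in>E. K * harm (nnz n (avg_step e v) - 1))
      \<le> (\<Sum>e\<in>E. K * harm (k - 1) + (if e \<in> B then K / k else 0))"
  proof (rule sum_mono)
    fix e assume "e \<in> E"
    then have "e \<subseteq> {..<n}" "card e = 2"
      using assms(1) unfolding simple_graph_def by auto
    from harm_potential_avg_step_le[OF this \<open>0 \<le> K\<close>, of v] \<open>e \<in> E\<close>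
    show "K * harm (nnz n (avg_step e v) - 1) \<le> K * harm (k - 1) + (if e \<in> B then K / k else 0)"
      by (simp add: B_def S_def k_def split: if_splits)
  qed
  also have "\<dots> = real (card E) * (K * harm (k - 1)) + real (card B) * (K / k)"
    using \<open>finite E\<close> by (simp add: sum.distrib sum.If_cases B_def Int_def conj_commute)
  finally show ?thesis
    using crossing_bound by (simp add: k_def distrib_left)
qed

text \<open>Choosing an edge outside \<open>E\<close> (a null event) leaves the state unchanged, so the
  update has countable range; this is what makes the stopped processes measurable.\<close>

definition edge_update :: "nat set set \<Rightarrow> nat set \<Rightarrow> (nat \<Rightarrow> real) \<Rightarrow> nat \<Rightarrow> real" where
  "edge_update E e = (if e \<in> E then avg_step e else id)"

lemma countable_range_edge_update: "finite E \<Longrightarrow> countable (range (edge_update E))"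
  by (rule countable_subset[of _ "insert id (avg_step ` E)"])
    (auto simp: edge_update_def intro: countable_finite)

lemma nn_integral_harm_potential_edge_update_le:
  assumes "simple_graph n E" "E \<noteq> {}" "0 \<le> K"
    and "\<And>i. i < n \<Longrightarrow> real (degree E i) * K \<le> real (card E)"
  shows "(\<integral>\<^sup>+e. ennreal (K * harm (nnz n (edge_update E e v) - 1)) \<partial>pmf_of_set E)
    \<le> ennreal (K * harm (nnz n v - 1)) + 1"
proof -
  have "finite E" by (rule finite_edges[OF assms(1)])
  then have "0 < card E" using assms(2) by (simp add: card_gt_0_iff)
  have nonneg: "0 \<le> K * harm j" for j
    using assms(3) by (simp add: harm_nonneg)
  have "(\<integral>\<^sup>+e. ennreal (K * harm (nnz n (edge_update E e v) - 1)) \<partial>pmf_of_set E)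
      = ennreal ((\<Sum>e\<in>E. K * harm (nnz n (avg_step e v) - 1)) / card E)"
    using \<open>finite E\<close> \<open>0 < card E\<close> nonneg
    by (simp add: nn_integral_pmf_of_set[OF assms(2) \<open>finite E\<close>] edge_update_def sum_ennreal
        divide_ennreal sum_nonneg ennreal_of_nat_eq_real_of_nat cong: sum.cong)
  also have "\<dots> \<le> ennreal (K * harm (nnz n v - 1) + 1)"
    using sum_harm_potential_avg_step_le[OF assms(1,3,4)] \<open>0 < card E\<close>
    by (intro ennreal_leI) (simp add: field_simps)
  also have "\<dots> = ennreal (K * harm (nnz n v - 1)) + 1"
    using nonneg by (simp add: ennreal_plus)
  finally show ?thesis .
qed

lemma avg_state_Suc: "avg_state v w (Suc t) = avg_state (avg_step (shd w) v) (stl w) t"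
  by (induction t) auto

lemma cov_time_step:
  assumes "\<not> \<alpha> * real n \<le> real (nnz n v)"
  shows "cov_time n \<alpha> v w = 1 + cov_time n \<alpha> (avg_step (shd w) v) (stl w)"
proof -
  define P where "P t \<longleftrightarrow> \<alpha> * real n \<le> real (nnz n (avg_state v w t))" for t
  define Q where "Q t \<longleftrightarrow> \<alpha> * real n \<le> real (nnz n (avg_state (avg_step (shd w) v) (stl w) t))" for t
  have "\<not> P 0" using assms unfolding P_def by simp
  have P_Suc: "P (Suc t) = Q t" for t unfolding P_def Q_def avg_state_Suc ..
  then have ex: "(\<exists>t. P t) = (\<exists>t. Q t)"
    using \<open>\<not> P 0\<close> by (metis not0_implies_Suc)
  show ?thesis
  proof (cases "\<exists>t. Q t")
    case True
    then obtain t where "P t" using ex by blast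
    then have "(LEAST t. P t) = Suc (LEAST t. Q t)"
      using Least_Suc[of P t] \<open>\<not> P 0\<close> P_Suc by simp
    then show ?thesis using True ex unfolding cov_time_def P_def[symmetric] Q_def[symmetric]
      by (simp add: of_nat_Suc add.commute)
  next
    case False
    then show ?thesis using ex unfolding cov_time_def P_def[symmetric] Q_def[symmetric] by simp
  qed
qed

lemma stopped_time_le_cov_time:
  assumes "\<forall>i. w !! i \<in> E"
  shows "of_nat (stopped_time (\<lambda>v. \<alpha> * real n \<le> real (nnz n v)) (edge_update E) N v w)
    \<le> cov_time n \<alpha> v w"
  using assms
proof (induction N arbitrary: v w)
  case (Suc N)
  have "shd w \<in> E" "\<forall>i. stl w !! i \<in> E"
    using Suc.prems by (metis snth.simps(1), metis snth.simps(2))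
  with Suc.IH cov_time_step show ?case
    by (auto simp: edge_update_def of_nat_Suc add.commute add_left_mono)
qed simp

lemma AE_edge_process_in_edges:
  assumes "finite E" "E \<noteq> {}"
  shows "AE w in edge_process E. \<forall>i. w !! i \<in> E"
proof -
  have "AE w in edge_process E. stream_all (\<lambda>e. e \<in> E) w"
    unfolding edge_process_def
    by (rule prob_space.AE_stream_all[OF prob_space_measure_pmf])
      (auto simp: AE_measure_pmf_iff assms)
  then show ?thesis by eventually_elim (auto simp: stream.pred_set snth_sset)
qed

lemma ln_le_harm_diff_one:
  assumes "0 < x" "x \<le> real k"
  shows "ln x \<le> harm (k - 1)"
proof -
  have "ln x \<le> ln (real (k - 1) + 1)"
    using assms by (subst of_nat_diff) auto
  also have "\<dots> \<le> harm (k - 1)" by (rule ln_le_harm)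
  finally show ?thesis .
qed

lemma nn_integral_stopped_time_le_tcov_from:
  assumes "finite E" "E \<noteq> {}"
  shows "(\<integral>\<^sup>+w. of_nat (stopped_time (\<lambda>v. \<alpha> * real n \<le> real (nnz n v)) (edge_update E) N
      (\<lambda>k. if k = i then 1 else 0) w) \<partial>stream_space (pmf_of_set E)) \<le> tcov_from n E \<alpha> i"
  unfolding tcov_from_def edge_process_def
  using AE_edge_process_in_edges[OF assms, unfolded edge_process_def]
  by (intro nn_integral_mono_AE) (auto simp: stopped_time_le_cov_time elim!: eventually_mono)

theorem proposition4:
  fixes n :: nat and E :: "nat set set" and C \<epsilon> :: real
  assumes "n \<ge> 2"
    and "simple_graph n E"
    and "graph_connected n E"
    and "real (Max (degree E ` {..<n})) / real (Min (degree E ` {..<n})) \<le> C"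
    and "0 < \<epsilon>" and "\<epsilon> < 1"
  shows "ennreal (real n / (2 * C) * ln ((1 - \<epsilon>) * real n)) \<le> tcov n E (1 - \<epsilon>)"
proof -
  define K where "K = real n / (2 * C)"
  let ?start = "\<lambda>k::nat. if k = 0 then 1 else 0 :: real"
  note positive = degree_pos[OF assms(2,3,1)]
  have "finite E" "E \<noteq> {}"
    using finite_edges[OF assms(2)] positive[of 0] assms(1) by (auto simp: degree_def)
  have "0 \<le> K"
    using degree_ratio_ge_one[OF _ positive assms(4)] assms(1) by (simp add: K_def)
  have drift: "(\<integral>\<^sup>+e. ennreal (K * harm (nnz n (edge_update E e v) - 1)) \<partial>pmf_of_set E)
      \<le> ennreal (K * harm (nnz n v - 1)) + 1" for v
    using degree_mult_le_card_edges[OF assms(2) _ positive assms(4)] assms(1)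
    by (intro nn_integral_harm_potential_edge_update_le assms(2) \<open>E \<noteq> {}\<close> \<open>0 \<le> K\<close>)
      (simp add: K_def)
  have hit: "ennreal (K * ln ((1 - \<epsilon>) * real n)) \<le> ennreal (K * harm (nnz n v - 1))"
    if "(1 - \<epsilon>) * real n \<le> real (nnz n v)" for v
    using that assms(1,6) \<open>0 \<le> K\<close> by (intro ennreal_leI mult_left_mono ln_le_harm_diff_one) auto
  have "ennreal (K * ln ((1 - \<epsilon>) * real n))
      \<le> ennreal (K * harm (nnz n ?start - 1)) + tcov_from n E (1 - \<epsilon>) 0"
    by (rule stopped_potential_lower_bound[OF countable_range_edge_update[OF \<open>finite E\<close>]
          drift hit nn_integral_stopped_time_le_tcov_from[OF \<open>finite E\<close> \<open>E \<noteq> {}\<close>]])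
  moreover have "nonzeros n ?start = {0}"
    using assms(1) by (auto simp: nonzeros_def)
  moreover have "tcov_from n E (1 - \<epsilon>) 0 \<le> tcov n E (1 - \<epsilon>)"
    unfolding tcov_def using assms(1) by (intro SUP_upper) auto
  ultimately show ?thesis
    by (simp add: K_def nnz_eq_card_nonzeros harm_def)
qed

end
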